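(* Let $\mathbf X\sim\mathcal N(\mathbf 0,\boldsymbol\Sigma)$ in $\mathbb R^d$ with $\boldsymbol\Sigma$ positive definite, eigenvalues $\lambda_1\ge\cdots\ge\lambda_d>0$ and orthonormal eigenvectors $v_1,\dots,v_d$; let $\mathbf V=(v_1,\dots,v_d)$ and $\mathbf Y=\mathbf V'\mathbf X$. For $\alpha\in(0,1)$ and $i\in\{1,\dots,d\}$ let $\boldsymbol\Lambda_{i,\alpha}:=\mathrm{Cov}(\mathbf Y\mid Y_i\in\mathsf T^\alpha_{Y_i})$. Then $\mathrm{Tr}(\boldsymbol\Lambda_{1,\alpha})\le\mathrm{Tr}(\boldsymbol\Lambda_{i,\alpha})\le\mathrm{Tr}(\boldsymbol\Lambda_{d,\alpha})$ for all $i$; i.e. the preserved total variance is maximized by peeling $Y_d$ and minimized by peeling $Y_1$.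
   Context: For a real random variable $W$, $Q_W(p)=\inf\{x:\mathbb P(W\le x)\ge p\}$ is its $p$-quantile and $\mathsf T^\alpha_W:=[Q_W(\alpha/2),Q_W(1-\alpha/2)]$. *)

theory Defs
  imports "HOL-Probability.Probability"
begin

definition mvn_density :: "real^'n^'n \<Rightarrow> real^'n \<Rightarrow> real" where
  "mvn_density S x =
     exp (- (x \<bullet> (matrix_inv S *v x)) / 2) / sqrt ((2 * pi) ^ CARD('n) * det S)"

definition quantile :: "'a measure \<Rightarrow> ('a \<Rightarrow> real) \<Rightarrow> real \<Rightarrow> real" where
  "quantile M W p = Inf {x. measure M {\<omega> \<in> space M. W \<omega> \<le> x} \<ge> p}"

definition central_interval :: "'a measure \<Rightarrow> ('a \<Rightarrow> real) \<Rightarrow> real \<Rightarrow> real set" where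
  "central_interval M W \<alpha> = {quantile M W (\<alpha>/2) .. quantile M W (1 - \<alpha>/2)}"

definition cond_expect :: "'a measure \<Rightarrow> 'a set \<Rightarrow> ('a \<Rightarrow> real) \<Rightarrow> real" where
  "cond_expect M A f = (\<integral>\<omega>. indicator A \<omega> * f \<omega> \<partial>M) / measure M A"

definition cond_cov :: "'a measure \<Rightarrow> 'a set \<Rightarrow> ('a \<Rightarrow> real) \<Rightarrow> ('a \<Rightarrow> real) \<Rightarrow> real" where
  "cond_cov M A f g =
     cond_expect M A (\<lambda>\<omega>. (f \<omega> - cond_expect M A f) * (g \<omega> - cond_expect M A g))"

definition cond_cov_matrix :: "'a measure \<Rightarrow> 'a set \<Rightarrow> (nat \<Rightarrow> 'a \<Rightarrow> real) \<Rightarrow> nat \<Rightarrow> nat \<Rightarrow> real" where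
  "cond_cov_matrix M A Y j k = cond_cov M A (Y j) (Y k)"

definition mat_trace :: "nat \<Rightarrow> (nat \<Rightarrow> nat \<Rightarrow> real) \<Rightarrow> real" where
  "mat_trace d L = (\<Sum>j=1..d. L j j)"

end

theory Submission
  imports Defs
begin

text \<open>In the eigenbasis of \<open>\<Sigma>\<close> the Gaussian density factorises and Lebesgue measure is
  rotation invariant, so the principal components \<open>Y\<^sub>j = v\<^sub>j \<bullet> X\<close> are independent \<open>N(0, \<lambda>\<^sub>j)\<close>.
  Conditioning on \<open>Y\<^sub>k \<in> T\<^sup>\<alpha>\<^bsub>Y\<^sub>k\<^esub>\<close> leaves the variance \<open>\<lambda>\<^sub>j\<close> of every other component unchanged,
  while \<open>Y\<^sub>k / \<surd>\<lambda>\<^sub>k\<close> becomes a standard normal truncated to \<open>[-q, q]\<close> with \<open>\<Phi>(q) = 1 - \<alpha>/2\<close>.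
  Its variance \<open>c \<le> 1\<close> does not depend on \<open>k\<close>, hence \<open>tr \<Lambda>\<^sub>k = (\<Sum>\<^sub>j \<lambda>\<^sub>j) - (1 - c) \<lambda>\<^sub>k\<close>, which
  decreases as \<open>\<lambda>\<^sub>k\<close> grows.\<close>

section \<open>Lebesgue measure is invariant under orthogonal maps\<close>

lemma borel_measurable_linear:
  fixes f :: "'a::euclidean_space \<Rightarrow> 'b::real_normed_vector"
  shows "linear f \<Longrightarrow> f \<in> borel_measurable borel"
  by (intro borel_measurable_continuous_onI linear_continuous_on) (simp add: linear_conv_bounded_linear)

lemma lborel_distr_orthogonal_wellorder:
  fixes T :: "real^'m::{finite,wellorder} \<Rightarrow> real^'m::_"
  assumes T: "orthogonal_transformation T"
  shows "distr lborel borel T = lborel"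
proof (rule lborel_eqI[symmetric])
  fix l u :: "real^'m::_"
  assume le: "\<And>b. b \<in> Basis \<Longrightarrow> l \<bullet> b \<le> u \<bullet> b"
  have inv_T: "orthogonal_transformation (inv T)"
    using T by (rule orthogonal_transformation_inv)
  have vimage_eq: "T -` box l u = inv T ` box l u"
    using T by (simp add: orthogonal_transformation_bij bij_vimage_eq_inv_image)
  have [measurable]: "T \<in> borel_measurable borel"
    using orthogonal_transformation_linear[OF T] by (rule borel_measurable_linear)
  have "T -` box l u \<in> sets borel"
    using measurable_sets_borel[of T borel "box l u"] by simp
  then have "emeasure (distr lborel borel T) (box l u) = emeasure lebesgue (inv T ` box l u)"
    by (simp add: emeasure_distr vimage_eq[symmetric])
  also have "\<dots> = measure lebesgue (box l u)"
    using measurable_orthogonal_image[OF inv_T] measure_orthogonal_image[OF inv_T]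
    by (simp add: emeasure_eq_measure2)
  also have "\<dots> = (\<Prod>b\<in>Basis. (u - l) \<bullet> b)"
    using le by (simp add: measure_lborel_box_eq)
  finally show "emeasure (distr lborel borel T) (box l u) = (\<Prod>b\<in>Basis. (u - l) \<bullet> b)" .
qed simp

lemma prod_Basis_cart: "(\<Prod>b\<in>(Basis :: (real^'n) set). f b) = (\<Prod>i\<in>UNIV. f (axis i 1))"
  by (simp add: Basis_vec_def prod.reindex inj_on_def axis_eq_axis UNION_singleton_eq_range)

lemma emeasure_lborel_box_cart:
  fixes l u :: "real^'n"
  assumes "\<And>i. l $ i \<le> u $ i"
  shows "emeasure lborel (box l u) = ennreal (\<Prod>i\<in>UNIV. u $ i - l $ i)"
proof -
  have "\<forall>b\<in>Basis. l \<bullet> b \<le> u \<bullet> b"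
    using assms by (auto simp: Basis_vec_def cart_eq_inner_axis[symmetric])
  then show ?thesis
    by (simp add: emeasure_lborel_box_eq prod_Basis_cart cart_eq_inner_axis[symmetric])
qed

definition cart_join :: "('m \<Rightarrow> 'n + 'k) \<Rightarrow> (real^'n) \<times> (real^'k) \<Rightarrow> real^'m" where
  "cart_join g p = (\<chi> i. case g i of Inl a \<Rightarrow> fst p $ a | Inr b \<Rightarrow> snd p $ b)"

definition cart_split :: "('m \<Rightarrow> 'n + 'k) \<Rightarrow> real^'m \<Rightarrow> (real^'n) \<times> (real^'k)" where
  "cart_split g z = ((\<chi> a. z $ inv g (Inl a)), (\<chi> b. z $ inv g (Inr b)))"

context
  fixes g :: "'m::finite \<Rightarrow> 'n::finite + 'k::finite"
  assumes g: "bij g"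
begin

lemma cart_join_split: "cart_join g (cart_split g z) = z"
  unfolding cart_join_def cart_split_def vec_eq_iff
  by (auto split: sum.split) (metis g bij_is_inj inv_f_f)+

lemma cart_split_join: "cart_split g (cart_join g p) = p"
  using g by (simp add: cart_join_def cart_split_def vec_eq_iff bij_is_surj surj_f_inv_f prod_eq_iff)

lemma linear_cart_join: "linear (cart_join g)"
  by (intro linearI) (auto simp: cart_join_def vec_eq_iff split: sum.split)

lemma linear_cart_split: "linear (cart_split g)"
  by (intro linearI) (auto simp: cart_split_def vec_eq_iff)

lemma cart_join_nth_inv: "cart_join g p $ inv g s = (case s of Inl a \<Rightarrow> fst p $ a | Inr b \<Rightarrow> snd p $ b)"
  using g by (simp add: cart_join_def bij_is_surj surj_f_inv_f)

lemma
  fixes f :: "'m \<Rightarrow> 'a::comm_monoid_add" and h :: "'m \<Rightarrow> 'b::comm_monoid_mult"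
  shows sum_UNIV_split_bij:
    "(\<Sum>i\<in>UNIV. f i) = (\<Sum>a\<in>UNIV. f (inv g (Inl a))) + (\<Sum>b\<in>UNIV. f (inv g (Inr b)))"
  and prod_UNIV_split_bij:
    "(\<Prod>i\<in>UNIV. h i) = (\<Prod>a\<in>UNIV. h (inv g (Inl a))) * (\<Prod>b\<in>UNIV. h (inv g (Inr b)))"
proof -
  have bij_inv: "bij_betw (inv g) (range Inl \<union> range Inr) UNIV"
    using g by (simp add: UNIV_sum[symmetric] bij_imp_bij_inv)
  show "(\<Sum>i\<in>UNIV. f i) = (\<Sum>a\<in>UNIV. f (inv g (Inl a))) + (\<Sum>b\<in>UNIV. f (inv g (Inr b)))"
    unfolding sum.reindex_bij_betw[OF bij_inv, symmetric]
    by (subst sum.union_disjoint) (auto simp: sum.reindex)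
  show "(\<Prod>i\<in>UNIV. h i) = (\<Prod>a\<in>UNIV. h (inv g (Inl a))) * (\<Prod>b\<in>UNIV. h (inv g (Inr b)))"
    unfolding prod.reindex_bij_betw[OF bij_inv, symmetric]
    by (subst prod.union_disjoint) (auto simp: prod.reindex)
qed

lemma inner_cart_join: "cart_join g p \<bullet> cart_join g q = p \<bullet> q"
  unfolding inner_vec_def[of "cart_join g p"]
  by (simp add: sum_UNIV_split_bij cart_join_nth_inv inner_vec_def inner_prod_def)

lemma orthogonal_transformation_cart_conj:
  assumes "orthogonal_transformation F"
  shows "orthogonal_transformation (cart_join g \<circ> F \<circ> cart_split g)"
  unfolding orthogonal_transformation_def
proof (intro conjI allI)
  show "linear (cart_join g \<circ> F \<circ> cart_split g)"
    using assms by (intro linear_compose linear_cart_join linear_cart_split orthogonal_transformation_linear)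
  have "F p \<bullet> F q = p \<bullet> q" for p q
    using assms unfolding orthogonal_transformation_def by blast
  moreover have "cart_split g v \<bullet> cart_split g w = v \<bullet> w" for v w
    using inner_cart_join[of "cart_split g v" "cart_split g w"] by (simp add: cart_join_split)
  ultimately show "(cart_join g \<circ> F \<circ> cart_split g) v \<bullet> (cart_join g \<circ> F \<circ> cart_split g) w = v \<bullet> w"
    for v w
    by (simp add: inner_cart_join)
qed

lemma vimage_cart_join_box:
  "cart_join g -` box l u =
     box (fst (cart_split g l)) (fst (cart_split g u)) \<times> box (snd (cart_split g l)) (snd (cart_split g u))"
proof (intro set_eqI)
  fix p
  have "p \<in> cart_join g -` box l u \<longleftrightarrow>
      (\<forall>s. l $ inv g s < cart_join g p $ inv g s \<and> cart_join g p $ inv g s < u $ inv g s)"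
    unfolding vimage_eq mem_box_cart by (metis g bij_is_inj inv_f_f)
  then show "p \<in> cart_join g -` box l u \<longleftrightarrow> p \<in> box (fst (cart_split g l)) (fst (cart_split g u)) \<times>
      box (snd (cart_split g l)) (snd (cart_split g u))"
    by (simp add: cart_join_nth_inv cart_split_def mem_box_cart split_sum_all mem_Times_iff)
qed

lemma lborel_distr_cart_join: "distr lborel borel (cart_join g) = lborel"
proof (rule lborel_eqI[symmetric])
  fix l u :: "real^'m"
  assume "\<And>b. b \<in> Basis \<Longrightarrow> l \<bullet> b \<le> u \<bullet> b"
  then have le: "l $ i \<le> u $ i" for i
    by (metis axis_in_Basis_iff cart_eq_inner_axis Basis_real_def insertI1)
  have [measurable]: "cart_join g \<in> borel_measurable borel"
    using linear_cart_join by (rule borel_measurable_linear)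
  have "emeasure (distr lborel borel (cart_join g)) (box l u) =
      emeasure (lborel \<Otimes>\<^sub>M lborel)
        (box (fst (cart_split g l)) (fst (cart_split g u)) \<times> box (snd (cart_split g l)) (snd (cart_split g u)))"
    by (simp add: emeasure_distr vimage_cart_join_box lborel_prod)
  also have "\<dots> = ennreal ((\<Prod>a\<in>UNIV. u $ inv g (Inl a) - l $ inv g (Inl a)) *
                            (\<Prod>b\<in>UNIV. u $ inv g (Inr b) - l $ inv g (Inr b)))"
    using le by (simp add: lborel.emeasure_pair_measure_Times emeasure_lborel_box_cart cart_split_def
        ennreal_mult prod_nonneg)
  also have "\<dots> = ennreal (\<Prod>i\<in>UNIV. u $ i - l $ i)"
    by (simp add: prod_UNIV_split_bij)
  also have "\<dots> = (\<Prod>b\<in>Basis. (u - l) \<bullet> b)"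
    by (simp add: prod_Basis_cart cart_eq_inner_axis[symmetric])
  finally show "emeasure (distr lborel borel (cart_join g)) (box l u) = (\<Prod>b\<in>Basis. (u - l) \<bullet> b)" .
qed simp

lemma lborel_distr_cart_split: "distr lborel borel (cart_split g) = lborel"
proof -
  have [measurable]: "cart_join g \<in> borel_measurable borel" "cart_split g \<in> borel_measurable borel"
    using linear_cart_join linear_cart_split by (simp_all add: borel_measurable_linear)
  have "distr lborel borel (cart_split g) = distr lborel borel (cart_split g \<circ> cart_join g)"
    by (simp add: distr_distr lborel_distr_cart_join[symmetric])
  then show ?thesis
    by (simp add: o_def cart_split_join distr_id2)
qed

end

lemma lborel_distr_orthogonal_prod:
  fixes g :: "'m::{finite,wellorder} \<Rightarrow> 'n::finite + 'k::finite"
    and F :: "(real^'n) \<times> (real^'k) \<Rightarrow> (real^'n) \<times> (real^'k)"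
  assumes g: "bij g" and F: "orthogonal_transformation F"
  shows "distr lborel borel F = lborel"
proof -
  define T where "T = cart_join g \<circ> F \<circ> cart_split g"
  have T: "orthogonal_transformation T"
    unfolding T_def using g F by (rule orthogonal_transformation_cart_conj)
  have [measurable]: "cart_join g \<in> borel_measurable borel" "cart_split g \<in> borel_measurable borel"
      "T \<in> borel_measurable borel"
    using linear_cart_join[OF g] linear_cart_split[OF g] orthogonal_transformation_linear[OF T]
    by (simp_all add: borel_measurable_linear)
  have "F = cart_split g \<circ> T \<circ> cart_join g"
    by (auto simp: T_def cart_split_join[OF g])
  then have "distr lborel borel F = distr (distr lborel borel (cart_join g)) borel (cart_split g \<circ> T)"
    by (simp only:) (rule distr_distr[symmetric]; simp)
  also have "\<dots> = distr (distr lborel borel T) borel (cart_split g)"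
    unfolding lborel_distr_cart_join[OF g] by (rule distr_distr[symmetric]) simp_all
  also have "\<dots> = lborel"
    by (simp add: lborel_distr_orthogonal_wellorder[OF T] lborel_distr_cart_split[OF g])
  finally show ?thesis .
qed

lemma lborel_distr_eq_if_map_prod_id:
  fixes U :: "'a::euclidean_space \<Rightarrow> 'a"
  assumes [measurable]: "U \<in> borel_measurable borel"
    and prod_eq: "distr lborel borel (map_prod U (id :: 'b::euclidean_space \<Rightarrow> 'b)) = lborel"
  shows "distr lborel borel U = lborel"
proof (rule measure_eqI)
  fix B
  assume "B \<in> sets (distr lborel borel U)"
  then have B [measurable]: "B \<in> sets borel"
    by simp
  define C :: "'b set" where "C = box 0 One"
  have C [measurable]: "C \<in> sets borel" and C_1: "emeasure lborel C = 1"
    by (simp_all add: C_def emeasure_lborel_box_eq)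
  have "U -` B \<in> sets borel"
    using measurable_sets_borel[of U borel B] by simp
  have "emeasure (distr lborel borel U) B = emeasure lborel (U -` B) * emeasure lborel C"
    by (simp add: emeasure_distr C_1)
  also have "\<dots> = emeasure lborel (U -` B \<times> C)"
    unfolding lborel_prod[symmetric] using \<open>U -` B \<in> sets borel\<close>
    by (simp add: lborel.emeasure_pair_measure_Times)
  also have "U -` B \<times> C = map_prod U id -` (B \<times> C)"
    by auto
  also have "emeasure lborel \<dots> = emeasure (distr lborel borel (map_prod U (id :: 'b \<Rightarrow> 'b))) (B \<times> C)"
  proof -
    have "B \<times> C \<in> sets (borel :: ('a \<times> 'b) measure)"
      using pair_measureI[OF B C] unfolding borel_prod .
    moreover have "map_prod U (id :: 'b \<Rightarrow> 'b) \<in> borel_measurable borel"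
      unfolding borel_prod[symmetric] map_prod_def id_def by measurable
    ultimately show ?thesis
      by (simp add: emeasure_distr)
  qed
  also have "\<dots> = emeasure lborel B * emeasure lborel C"
    unfolding prod_eq using B C by (simp add: lborel_prod[symmetric] lborel.emeasure_pair_measure_Times)
  finally show "emeasure (distr lborel borel U) B = emeasure lborel B"
    by (simp add: C_1)
qed simp

text \<open>The library proves invariance of Lebesgue measure under orthogonal maps only for
  index types of class \<open>wellorder\<close>. For a general index type \<open>'n\<close>, the map \<open>U \<times> id\<close>
  on \<open>real^'n \<times> real^'n\<close> is transported to \<open>real^('n bit0)\<close>, whose index type is well-ordered.\<close>

lemma lborel_distr_orthogonal:
  fixes U :: "real^'n \<Rightarrow> real^'n"
  assumes U: "orthogonal_transformation U"
  shows "distr lborel borel U = lborel"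
proof -
  have "CARD('n bit0) = CARD('n + 'n)"
    by (simp add: card_UNIV_sum)
  then obtain g :: "'n bit0 \<Rightarrow> 'n + 'n" where g: "bij g"
    using finite_same_card_bij[of "UNIV :: 'n bit0 set" "UNIV :: ('n + 'n) set"] by (auto simp: bij_betw_def)
  have "orthogonal_transformation (map_prod U (id :: real^'n \<Rightarrow> _))"
    using U unfolding orthogonal_transformation_def map_prod_def
    by (auto intro!: linearI simp: split_beta linear_add linear_scale inner_prod_def)
  then have "distr lborel borel (map_prod U (id :: real^'n \<Rightarrow> _)) = lborel"
    by (rule lborel_distr_orthogonal_prod[OF g])
  moreover have "U \<in> borel_measurable borel"
    using orthogonal_transformation_linear[OF U] by (rule borel_measurable_linear)
  ultimately show ?thesis
    by (rule lborel_distr_eq_if_map_prod_id[rotated])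
qed

section \<open>The standard normal distribution\<close>

lemma emeasure_std_normal:
  "A \<in> sets borel \<Longrightarrow>
    emeasure std_normal_distribution A = (\<integral>\<^sup>+x. ennreal (std_normal_density x) * indicator A x \<partial>lborel)"
  by (rule emeasure_density) simp_all

interpretation std_normal: real_distribution std_normal_distribution
  by (rule real_dist_normal_dist)

lemma (in prob_space) distr_eq_std_normal:
  assumes "distributed M lborel Z std_normal_density"
  shows "distr M borel Z = std_normal_distribution"
proof -
  have "distr M borel Z = distr M lborel Z"
    by (rule distr_cong) simp_all
  then show ?thesis
    using distributed_distr_eq_density[OF assms] by simp
qed

lemma measure_std_normal_singleton [simp]: "measure std_normal_distribution {x} = 0"
proof -
  have "AE t in lborel. ennreal (std_normal_density t) * indicator {x} t = 0"
    using AE_lborel_singleton[of x] by eventually_elim simp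
  then show ?thesis
    by (simp add: measure_def emeasure_std_normal nn_integral_0_iff_AE)
qed

lemma isCont_cdf_std_normal: "isCont (cdf std_normal_distribution) x"
  by (simp add: std_normal.isCont_cdf)

lemma cdf_std_normal_strict_mono:
  assumes "x < y"
  shows "cdf std_normal_distribution x < cdf std_normal_distribution y"
proof -
  have "emeasure std_normal_distribution {x<..y} \<noteq> 0"
  proof
    assume "emeasure std_normal_distribution {x<..y} = 0"
    then have "(\<integral>\<^sup>+t. ennreal (std_normal_density t) * indicator {x<..y} t \<partial>lborel) = 0"
      by (simp add: emeasure_std_normal)
    then have "AE t in lborel. ennreal (std_normal_density t) * indicator {x<..y} t = 0"
      by (rule nn_integral_0_iff_AE[THEN iffD1, rotated]) simp
    moreover have "std_normal_density t \<noteq> 0" for t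
      using normal_density_pos[of 1 0 t] by simp
    ultimately have "AE t in lborel. t \<notin> {x<..y}"
      by (auto elim!: eventually_mono simp: indicator_def split: if_splits)
    then have "emeasure lborel {x<..y} = 0"
      by (subst (asm) AE_iff_measurable[of "{x<..y}"]) auto
    with assms show False by simp
  qed
  then have "0 < measure std_normal_distribution {x<..y}"
    by (simp add: std_normal.emeasure_eq_measure zero_less_measure_iff)
  then show ?thesis
    using std_normal.cdf_diff_eq[OF assms] by simp
qed

lemma cdf_std_normal_le_iff: "cdf std_normal_distribution x \<le> cdf std_normal_distribution y \<longleftrightarrow> x \<le> y"
  by (metis cdf_std_normal_strict_mono linorder_not_less order_le_less)

lemma cdf_std_normal_minus: "cdf std_normal_distribution (- x) = 1 - cdf std_normal_distribution x"
proof -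
  have "emeasure std_normal_distribution {..- x} =
      (\<integral>\<^sup>+t. ennreal (std_normal_density t) * indicator {..- x} t \<partial>lborel)"
    by (simp add: emeasure_std_normal)
  also have "\<dots> =
      (\<integral>\<^sup>+t. ennreal (std_normal_density (0 + (- 1) * t)) * indicator {..- x} (0 + (- 1) * t) \<partial>lborel)"
    by (subst nn_integral_real_affine[where c="- 1" and t=0]) simp_all
  also have "\<dots> = (\<integral>\<^sup>+t. ennreal (std_normal_density t) * indicator {x..} t \<partial>lborel)"
    by (intro nn_integral_cong) (simp add: normal_density_def indicator_def)
  also have "\<dots> = emeasure std_normal_distribution {x..}"
    by (simp add: emeasure_std_normal)
  finally have "measure std_normal_distribution {..- x} = measure std_normal_distribution {x..}"
    by (simp add: measure_def)
  also have "\<dots> = 1 - measure std_normal_distribution {..<x}"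
    using std_normal.prob_compl[of "{..<x}"] by (simp add: Compl_eq_Diff_UNIV[symmetric])
  also have "measure std_normal_distribution {..<x} = measure std_normal_distribution {..x}"
    using std_normal.finite_measure_Union[of "{..<x}" "{x}"] ivl_disj_un_singleton(2)[of x] by simp
  finally show ?thesis
    by (simp add: cdf_def)
qed

lemma cdf_std_normal_surj:
  assumes "0 < p" "p < 1"
  obtains q where "cdf std_normal_distribution q = p"
proof -
  obtain b where b: "p < cdf std_normal_distribution b"
    using order_tendstoD(1)[OF std_normal.cdf_lim_at_top_prob \<open>p < 1\<close>]
    by (auto simp: eventually_at_top_linorder)
  obtain a where a: "cdf std_normal_distribution a < p" "a \<le> b"
    using order_tendstoD(2)[OF std_normal.cdf_lim_at_bot \<open>0 < p\<close>]
    by (auto simp: eventually_at_bot_linorder) (metis min.cobounded1 min.cobounded2)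
  show ?thesis
    using IVT[of "cdf std_normal_distribution" a p b] a b isCont_cdf_std_normal that by auto
qed

lemma measure_std_normal_symmetric_interval:
  assumes "0 \<le> q"
  shows "measure std_normal_distribution {- q..q} = 2 * cdf std_normal_distribution q - 1"
proof (cases "q = 0")
  case False
  have "{- q..q} = {- q} \<union> {- q<..q}"
    using assms by auto
  then have "measure std_normal_distribution {- q..q} = measure std_normal_distribution {- q<..q}"
    using std_normal.finite_measure_Union[of "{- q}" "{- q<..q}"] by simp
  then show ?thesis
    using std_normal.cdf_diff_eq[of "- q" q] assms False by (simp add: cdf_std_normal_minus)
qed (use cdf_std_normal_minus[of 0] in simp)

section \<open>Quantiles and conditional moments\<close>

lemma quantile_eqI:
  assumes "\<And>x. p \<le> measure M {\<omega> \<in> space M. W \<omega> \<le> x} \<longleftrightarrow> x\<^sub>0 \<le> x"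
  shows "quantile M W p = x\<^sub>0"
  unfolding quantile_def using assms by (simp add: atLeast_def[symmetric])

lemma cond_expect_mult_left: "cond_expect M A (\<lambda>\<omega>. c * f \<omega>) = c * cond_expect M A f"
  by (simp add: cond_expect_def mult.left_commute)

lemma cond_cov_mult:
  "cond_cov M A (\<lambda>\<omega>. c * f \<omega>) (\<lambda>\<omega>. d * g \<omega>) = c * d * cond_cov M A f g"
proof -
  have "(c * f \<omega> - c * cond_expect M A f) * (d * g \<omega> - d * cond_expect M A g) =
      c * d * ((f \<omega> - cond_expect M A f) * (g \<omega> - cond_expect M A g))" for \<omega>
    by (simp add: algebra_simps)
  then show ?thesis
    by (simp add: cond_cov_def cond_expect_mult_left)
qed

lemma cond_expect_distr:
  assumes [measurable]: "Z \<in> borel_measurable M" "J \<in> sets borel" "h \<in> borel_measurable borel"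
  shows "cond_expect M {\<omega> \<in> space M. Z \<omega> \<in> J} (\<lambda>\<omega>. h (Z \<omega>)) = cond_expect (distr M borel Z) J h"
proof -
  have "(\<integral>\<omega>. indicator {\<omega> \<in> space M. Z \<omega> \<in> J} \<omega> * h (Z \<omega>) \<partial>M) =
      (\<integral>\<omega>. indicator J (Z \<omega>) * h (Z \<omega>) \<partial>M)"
    by (intro Bochner_Integration.integral_cong) (auto simp: indicator_def)
  moreover have "Z -` J \<inter> space M = {\<omega> \<in> space M. Z \<omega> \<in> J}"
    by auto
  ultimately show ?thesis
    by (simp add: cond_expect_def integral_distr measure_distr)
qed

lemma cond_cov_distr:
  assumes [measurable]: "Z \<in> borel_measurable M" "J \<in> sets borel"
    "f \<in> borel_measurable borel" "g \<in> borel_measurable borel"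
  shows "cond_cov M {\<omega> \<in> space M. Z \<omega> \<in> J} (\<lambda>\<omega>. f (Z \<omega>)) (\<lambda>\<omega>. g (Z \<omega>)) =
    cond_cov (distr M borel Z) J f g"
  unfolding cond_cov_def cond_expect_distr[OF assms(1,2,3)] cond_expect_distr[OF assms(1,2,4)]
  using cond_expect_distr[OF assms(1,2), of "\<lambda>z. (f z - cond_expect (distr M borel Z) J f) *
    (g z - cond_expect (distr M borel Z) J g)"] by simp

context prob_space
begin

lemma integrable_events_indicator: "A \<in> events \<Longrightarrow> integrable M (indicator A :: 'a \<Rightarrow> real)"
  by (rule integrable_real_indicator) (simp_all add: less_top[symmetric])

lemma cond_cov_self_le_cond_expect_square:
  assumes [measurable]: "A \<in> events"
    and int1: "integrable M (\<lambda>\<omega>. indicator A \<omega> * f \<omega>)"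
    and int2: "integrable M (\<lambda>\<omega>. indicator A \<omega> * (f \<omega>)\<^sup>2)"
  shows "cond_cov M A f f \<le> cond_expect M A (\<lambda>\<omega>. (f \<omega>)\<^sup>2)"
proof (cases "prob A = 0")
  case False
  define m where "m = cond_expect M A f"
  have cov: "cond_cov M A f f = (\<integral>\<omega>. indicator A \<omega> * ((f \<omega> - m) * (f \<omega> - m)) \<partial>M) / prob A"
    unfolding cond_cov_def m_def[symmetric] by (simp only: cond_expect_def)
  have int_f: "(\<integral>\<omega>. indicator A \<omega> * f \<omega> \<partial>M) = m * prob A"
    using False by (simp add: m_def cond_expect_def)
  have "(\<integral>\<omega>. indicator A \<omega> * ((f \<omega> - m) * (f \<omega> - m)) \<partial>M) =
      (\<integral>\<omega>. indicator A \<omega> * (f \<omega>)\<^sup>2 - 2 * m * (indicator A \<omega> * f \<omega>) + m\<^sup>2 * indicator A \<omega> \<partial>M)"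
    by (intro Bochner_Integration.integral_cong) (simp_all add: algebra_simps power2_eq_square)
  also have "\<dots> = (\<integral>\<omega>. indicator A \<omega> * (f \<omega>)\<^sup>2 \<partial>M) - m\<^sup>2 * prob A"
    using int1 int2 integrable_events_indicator[of A]
    by (simp add: int_f power2_eq_square)
  finally have "(\<integral>\<omega>. indicator A \<omega> * ((f \<omega> - m) * (f \<omega> - m)) \<partial>M) \<le>
      (\<integral>\<omega>. indicator A \<omega> * (f \<omega>)\<^sup>2 \<partial>M)"
    by simp
  then show ?thesis
    unfolding cov cond_expect_def by (rule divide_right_mono) simp
qed (simp add: cond_cov_def cond_expect_def)

text \<open>On \<open>A\<close> the integrand \<open>f\<^sup>2\<close> is at most \<open>T\<^sup>2\<close> and off \<open>A\<close> at least \<open>T\<^sup>2\<close>, so its mean over \<open>A\<close>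
  is at most its mean over the complement, and hence at most the overall mean.\<close>

lemma cond_expect_square_truncation_le:
  fixes T :: real
  assumes [measurable]: "f \<in> borel_measurable M"
    and int: "integrable M (\<lambda>\<omega>. (f \<omega>)\<^sup>2)"
  defines "A \<equiv> {\<omega> \<in> space M. \<bar>f \<omega>\<bar> \<le> T}"
  shows "cond_expect M A (\<lambda>\<omega>. (f \<omega>)\<^sup>2) \<le> expectation (\<lambda>\<omega>. (f \<omega>)\<^sup>2)"
proof (cases "prob A = 0")
  case False
  have [measurable]: "A \<in> events"
    unfolding A_def by measurable
  define a where "a = (\<integral>\<omega>. indicator A \<omega> * (f \<omega>)\<^sup>2 \<partial>M)"
  have int_ind: "integrable M (indicator A :: 'a \<Rightarrow> real)"
    by (rule integrable_events_indicator) simp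
  have int_A: "integrable M (\<lambda>\<omega>. indicator A \<omega> * (f \<omega>)\<^sup>2)"
    using integrable_real_mult_indicator[OF _ int, of A] by (simp add: mult.commute)
  have square_le: "(f \<omega>)\<^sup>2 \<le> T\<^sup>2" if "\<omega> \<in> A" for \<omega>
    using that power_mono[of "\<bar>f \<omega>\<bar>" T 2] by (simp add: A_def)
  have "A \<noteq> {}"
    using False by auto
  then have "0 \<le> T"
    unfolding A_def by force
  then have square_ge: "T\<^sup>2 \<le> (f \<omega>)\<^sup>2" if "\<omega> \<in> space M" "\<omega> \<notin> A" for \<omega>
    using that power_mono[of T "\<bar>f \<omega>\<bar>" 2] by (auto simp: A_def)
  have "a \<le> (\<integral>\<omega>. indicator A \<omega> * T\<^sup>2 \<partial>M)"
    unfolding a_def using int_A int_ind square_le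
    by (intro integral_mono) (auto split: split_indicator)
  then have inside: "a \<le> T\<^sup>2 * prob A"
    by (simp add: mult.commute)
  have "T\<^sup>2 * (1 - prob A) = (\<integral>\<omega>. (1 - indicator A \<omega>) * T\<^sup>2 \<partial>M)"
    using int_ind by (simp add: left_diff_distrib prob_space mult.commute)
  also have "\<dots> \<le> (\<integral>\<omega>. (1 - indicator A \<omega>) * (f \<omega>)\<^sup>2 \<partial>M)"
    using int int_A int_ind square_ge
    by (intro integral_mono) (auto simp: left_diff_distrib split: split_indicator)
  also have "\<dots> = expectation (\<lambda>\<omega>. (f \<omega>)\<^sup>2) - a"
    using int int_A by (simp add: a_def left_diff_distrib)
  finally have outside: "T\<^sup>2 * (1 - prob A) \<le> expectation (\<lambda>\<omega>. (f \<omega>)\<^sup>2) - a" .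
  have "a * (1 - prob A) \<le> prob A * (expectation (\<lambda>\<omega>. (f \<omega>)\<^sup>2) - a)"
    using mult_right_mono[OF inside, of "1 - prob A"] mult_left_mono[OF outside, of "prob A"]
    by (simp add: algebra_simps)
  then have "a \<le> prob A * expectation (\<lambda>\<omega>. (f \<omega>)\<^sup>2)"
    by (simp add: algebra_simps)
  then show ?thesis
    using False by (simp add: cond_expect_def a_def[symmetric] divide_le_eq mult.commute)
qed (simp add: cond_expect_def integral_nonneg_AE)

lemma integral_indicator_indep:
  assumes indep: "indep_var borel Z borel W" and [measurable]: "J \<in> sets borel"
    and [measurable]: "h \<in> borel_measurable borel" and int_h: "integrable M (\<lambda>\<omega>. h (W \<omega>))"
  shows "(\<integral>\<omega>. indicator {\<omega> \<in> space M. Z \<omega> \<in> J} \<omega> * h (W \<omega>) \<partial>M) =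
    prob {\<omega> \<in> space M. Z \<omega> \<in> J} * expectation (\<lambda>\<omega>. h (W \<omega>))"
proof -
  define A where "A = {\<omega> \<in> space M. Z \<omega> \<in> J}"
  have [measurable]: "Z \<in> borel_measurable M"
    using indep_var_rv1[OF indep] by simp
  have A [measurable]: "A \<in> events"
    unfolding A_def by measurable
  have ind_eq: "indicator A \<omega> = (indicator J (Z \<omega>) :: real)" if "\<omega> \<in> space M" for \<omega>
    using that by (simp add: A_def indicator_def)
  have "expectation (indicator A :: 'a \<Rightarrow> real) = prob A"
    using A by simp
  then have expectation_J: "expectation (\<lambda>\<omega>. indicator J (Z \<omega>) :: real) = prob A"
    by (metis (no_types, lifting) Bochner_Integration.integral_cong ind_eq)
  have "integrable M (\<lambda>\<omega>. indicator A \<omega> :: real) \<longleftrightarrow>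
      integrable M (\<lambda>\<omega>. indicator J (Z \<omega>) :: real)"
    by (rule Bochner_Integration.integrable_cong) (simp_all add: ind_eq)
  then have "integrable M (\<lambda>\<omega>. indicator J (Z \<omega>) :: real)"
    using integrable_events_indicator[OF A] by simp
  moreover have "indep_var borel (indicator J \<circ> Z) borel (h \<circ> W)"
    by (rule indep_var_compose[OF indep]) simp_all
  ultimately have "(\<integral>\<omega>. indicator J (Z \<omega>) * h (W \<omega>) \<partial>M) =
      expectation (\<lambda>\<omega>. indicator J (Z \<omega>)) * expectation (\<lambda>\<omega>. h (W \<omega>))"
    using int_h by (intro indep_var_lebesgue_integral) (simp_all add: o_def)
  then show ?thesis
    using ind_eq expectation_J unfolding A_def[symmetric] by (simp cong: Bochner_Integration.integral_cong)
qed

lemma cond_cov_indep: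
  assumes indep: "indep_var borel Z borel W" and [measurable]: "J \<in> sets borel"
    and pos: "prob {\<omega> \<in> space M. Z \<omega> \<in> J} \<noteq> 0"
    and int1: "integrable M W" and int2: "integrable M (\<lambda>\<omega>. (W \<omega>)\<^sup>2)"
  shows "cond_cov M {\<omega> \<in> space M. Z \<omega> \<in> J} W W = variance W"
proof -
  have mean: "cond_expect M {\<omega> \<in> space M. Z \<omega> \<in> J} W = expectation W"
    using integral_indicator_indep[OF indep _ _ int1] pos by (simp add: cond_expect_def)
  have "(\<lambda>\<omega>. (W \<omega> - expectation W) * (W \<omega> - expectation W)) =
      (\<lambda>\<omega>. (W \<omega>)\<^sup>2 - 2 * expectation W * W \<omega> + (expectation W)\<^sup>2)"
    by (simp add: fun_eq_iff power2_eq_square algebra_simps)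
  then have "integrable M (\<lambda>\<omega>. (W \<omega> - expectation W) * (W \<omega> - expectation W))"
    using int1 int2 by simp
  then show ?thesis
    using integral_indicator_indep[OF indep, where h="\<lambda>x. (x - expectation W) * (x - expectation W)"] pos
    unfolding cond_cov_def mean by (simp add: cond_expect_def power2_eq_square)
qed

end

lemma measure_std_normal_central_interval:
  assumes "\<alpha> < 1" and q: "cdf std_normal_distribution q = 1 - \<alpha> / 2"
  shows "measure std_normal_distribution {- q..q} = 1 - \<alpha>"
proof -
  have "cdf std_normal_distribution 0 \<le> cdf std_normal_distribution q"
    using cdf_std_normal_minus[of 0] q assms(1) by simp
  then have "0 \<le> q"
    by (simp add: cdf_std_normal_le_iff)
  then show ?thesis
    by (simp add: measure_std_normal_symmetric_interval q)
qed

lemma cond_var_std_normal_symmetric_le_1: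
  "cond_cov std_normal_distribution {- q..q} (\<lambda>z. z) (\<lambda>z. z) \<le> 1"
proof -
  have interval: "{- q..q} = {z \<in> space std_normal_distribution. \<bar>z\<bar> \<le> q}"
    by auto
  have square: "integrable std_normal_distribution (\<lambda>z. z\<^sup>2)" "(\<integral>z. z\<^sup>2 \<partial>std_normal_distribution) = 1"
    using std_normal_distribution_even_moments[of 1] by simp_all
  have "integrable std_normal_distribution (\<lambda>z. indicator {- q..q} z * z)"
    using integrable_real_mult_indicator[of "{- q..q}" std_normal_distribution "\<lambda>z. z"]
      integrable_std_normal_distribution_moment[of 1] by (simp add: mult.commute)
  moreover have "integrable std_normal_distribution (\<lambda>z. indicator {- q..q} z * z\<^sup>2)"
    using integrable_real_mult_indicator[of "{- q..q}" std_normal_distribution "\<lambda>z. z\<^sup>2"] square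
    by (simp add: mult.commute)
  ultimately have "cond_cov std_normal_distribution {- q..q} (\<lambda>z. z) (\<lambda>z. z) \<le>
      cond_expect std_normal_distribution {- q..q} (\<lambda>z. z\<^sup>2)"
    by (intro std_normal.cond_cov_self_le_cond_expect_square) simp_all
  also have "\<dots> \<le> 1"
    using std_normal.cond_expect_square_truncation_le[of "\<lambda>z. z" q] square by (simp add: interval)
  finally show ?thesis .
qed

section \<open>Principal components of a centred Gaussian vector\<close>

lemma orthonormal_frame:
  fixes v :: "'i \<Rightarrow> 'a::euclidean_space" and \<beta> :: "'i \<Rightarrow> 'a"
  assumes \<beta>: "bij_betw \<beta> I Basis"
    and orthonormal: "\<And>j k. j \<in> I \<Longrightarrow> k \<in> I \<Longrightarrow> v j \<bullet> v k = (if j = k then 1 else 0)"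
  defines "U \<equiv> \<lambda>w. \<Sum>j\<in>I. (w \<bullet> \<beta> j) *\<^sub>R v j"
  shows orthonormal_frame_inner: "\<And>k w. k \<in> I \<Longrightarrow> v k \<bullet> U w = w \<bullet> \<beta> k"
    and orthonormal_frame_orthogonal: "orthogonal_transformation U"
proof -
  have I: "finite I"
    using bij_betw_finite[OF \<beta>] by simp
  have U_apply: "U w = (\<Sum>j\<in>I. (w \<bullet> \<beta> j) *\<^sub>R v j)" for w
    by (simp add: U_def)
  show coord: "v k \<bullet> U w = w \<bullet> \<beta> k" if "k \<in> I" for k w
  proof -
    have "v k \<bullet> U w = (\<Sum>j\<in>I. if j = k then w \<bullet> \<beta> j else 0)"
      unfolding U_apply inner_sum_right using that by (intro sum.cong) (auto simp: orthonormal)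
    then show ?thesis
      using I that by simp
  qed
  have "U w \<bullet> U w' = w \<bullet> w'" for w w'
  proof -
    have "U w \<bullet> U w' = (\<Sum>j\<in>I. (w \<bullet> \<beta> j) * (w' \<bullet> \<beta> j))"
      unfolding U_apply[of w] inner_sum_left by (intro sum.cong) (simp_all add: coord)
    also have "\<dots> = (\<Sum>b\<in>Basis. (w \<bullet> b) * (w' \<bullet> b))"
      by (rule sum.reindex_bij_betw[OF \<beta>])
    also have "\<dots> = w \<bullet> w'"
      by (rule euclidean_inner[symmetric])
    finally show ?thesis .
  qed
  moreover have "linear U"
    unfolding U_def
    by (intro linearI) (simp_all add: inner_add_left scaleR_add_left sum.distrib scaleR_sum_right)
  ultimately show "orthogonal_transformation U"
    by (simp add: orthogonal_transformation_def)
qed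

lemma invertible_if_posdef:
  fixes A :: "real^'n^'n"
  assumes "\<And>x. x \<noteq> 0 \<Longrightarrow> 0 < x \<bullet> (A *v x)"
  shows "invertible A"
proof -
  have "\<forall>x. A *v x = 0 \<longrightarrow> x = 0"
    using assms by (metis inner_zero_right less_irrefl)
  then show ?thesis
    by (simp add: invertible_left_inverse matrix_left_invertible_ker)
qed

lemma matrix_inv_mult_eigenvector:
  fixes A :: "real^'n^'n"
  assumes "invertible A" and "A *v x = c *\<^sub>R x" and "c \<noteq> 0"
  shows "matrix_inv A *v x = inverse c *\<^sub>R x"
proof -
  have "matrix_inv A ** A = mat 1"
    using someI_ex[OF assms(1)[unfolded invertible_def]] by (simp add: matrix_inv_def)
  then have "x = c *\<^sub>R (matrix_inv A *v x)"
    by (metis assms(2) matrix_vector_mul_assoc matrix_vector_mul_lid matrix_vector_mult_scaleR)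
  then show ?thesis
    using assms(3) by (metis scaleR_scaleR left_inverse scaleR_one)
qed

lemma mvn_density_eigenbasis:
  fixes \<Sigma> :: "real^'n^'n" and v :: "'i \<Rightarrow> real^'n"
  assumes posdef: "\<And>x. x \<noteq> 0 \<Longrightarrow> 0 < x \<bullet> (\<Sigma> *v x)"
    and "finite I"
    and orthonormal: "\<And>j k. j \<in> I \<Longrightarrow> k \<in> I \<Longrightarrow> v j \<bullet> v k = (if j = k then 1 else 0)"
    and eigen: "\<And>j. j \<in> I \<Longrightarrow> \<Sigma> *v v j = lam j *\<^sub>R v j"
    and pos: "\<And>j. j \<in> I \<Longrightarrow> 0 < lam j"
  obtains K where "\<And>c. mvn_density \<Sigma> (\<Sum>j\<in>I. c j *\<^sub>R v j) =
    K * (\<Prod>j\<in>I. normal_density 0 (sqrt (lam j)) (c j))"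
proof
  fix c :: "'i \<Rightarrow> real"
  define x where "x = (\<Sum>j\<in>I. c j *\<^sub>R v j)"
  have inv_v: "matrix_inv \<Sigma> *v v j = inverse (lam j) *\<^sub>R v j" if "j \<in> I" for j
    using matrix_inv_mult_eigenvector[OF invertible_if_posdef[OF posdef] eigen[OF that]] pos[OF that]
    by simp
  have "matrix_inv \<Sigma> *v x = (\<Sum>j\<in>I. (c j / lam j) *\<^sub>R v j)"
    by (simp add: x_def matrix_vector_mult_scaleR vec.sum inv_v divide_inverse cong: sum.cong)
  moreover have "x \<bullet> v j = c j" if "j \<in> I" for j
  proof -
    have "x \<bullet> v j = (\<Sum>k\<in>I. if k = j then c k else 0)"
      unfolding x_def inner_sum_left using that by (intro sum.cong) (auto simp: orthonormal)
    then show ?thesis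
      using \<open>finite I\<close> that by simp
  qed
  ultimately have "x \<bullet> (matrix_inv \<Sigma> *v x) = (\<Sum>j\<in>I. (c j)\<^sup>2 / lam j)"
    by (simp add: inner_sum_right power2_eq_square cong: sum.cong)
  then have "exp (- (x \<bullet> (matrix_inv \<Sigma> *v x)) / 2) = (\<Prod>j\<in>I. exp (- (c j)\<^sup>2 / lam j / 2))"
    using \<open>finite I\<close> by (simp add: exp_sum[symmetric] sum_divide_distrib sum_negf)
  moreover have "(\<Prod>j\<in>I. normal_density 0 (sqrt (lam j)) (c j)) =
      (\<Prod>j\<in>I. exp (- (c j)\<^sup>2 / lam j / 2)) / (\<Prod>j\<in>I. sqrt (2 * pi * lam j))"
  proof -
    have "normal_density 0 (sqrt (lam j)) t = exp (- t\<^sup>2 / lam j / 2) / sqrt (2 * pi * lam j)"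
      if "j \<in> I" for j t
      using pos[OF that] by (simp add: normal_density_def real_sqrt_mult mult.commute)
    then show ?thesis
      unfolding prod_dividef[symmetric] by (intro prod.cong) simp_all
  qed
  moreover have "(\<Prod>j\<in>I. sqrt (2 * pi * lam j)) \<noteq> 0"
    using pos \<open>finite I\<close> by force
  ultimately show "mvn_density \<Sigma> x = (\<Prod>j\<in>I. sqrt (2 * pi * lam j)) / sqrt ((2 * pi) ^ CARD('n) * det \<Sigma>) *
      (\<Prod>j\<in>I. normal_density 0 (sqrt (lam j)) (c j))"
    by (simp add: mvn_density_def)
qed

lemma nn_integral_lborel_prod_bij:
  fixes \<beta> :: "'i \<Rightarrow> 'a::euclidean_space"
  assumes \<beta>: "bij_betw \<beta> I Basis"
    and [measurable]: "\<And>j. j \<in> I \<Longrightarrow> f j \<in> borel_measurable borel"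
  shows "(\<integral>\<^sup>+x. (\<Prod>j\<in>I. f j (x \<bullet> \<beta> j)) \<partial>lborel) = (\<Prod>j\<in>I. \<integral>\<^sup>+t. f j t \<partial>lborel)"
proof -
  define \<gamma> where "\<gamma> = inv_into I \<beta>"
  have \<gamma>: "\<gamma> (\<beta> j) = j" if "j \<in> I" for j
    using \<beta> that by (simp add: \<gamma>_def bij_betw_inv_into_left)
  have \<gamma>_in: "\<gamma> b \<in> I" if "b \<in> Basis" for b
    using \<beta> that by (simp add: \<gamma>_def bij_betw_def inv_into_into)
  have "(\<Prod>j\<in>I. f j (x \<bullet> \<beta> j)) = (\<Prod>b\<in>Basis. f (\<gamma> b) (x \<bullet> b))" for x
    using prod.reindex_bij_betw[OF \<beta>, of "\<lambda>b. f (\<gamma> b) (x \<bullet> b)"] by (simp add: \<gamma> cong: prod.cong)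
  moreover have "(\<Prod>j\<in>I. \<integral>\<^sup>+t. f j t \<partial>lborel) = (\<Prod>b\<in>Basis. \<integral>\<^sup>+t. f (\<gamma> b) t \<partial>lborel)"
    using prod.reindex_bij_betw[OF \<beta>, of "\<lambda>b. \<integral>\<^sup>+t. f (\<gamma> b) t \<partial>lborel"] by (simp add: \<gamma> cong: prod.cong)
  moreover have "(\<integral>\<^sup>+x. (\<Prod>b\<in>Basis. f (\<gamma> b) (x \<bullet> b)) \<partial>lborel) =
      (\<Prod>b\<in>Basis. \<integral>\<^sup>+t. f (\<gamma> b) t \<partial>lborel)"
    by (rule nn_integral_lborel_prod) (simp_all add: \<gamma>_in)
  ultimately show ?thesis
    by simp
qed

abbreviation centred_normal :: "real \<Rightarrow> real measure" where
  "centred_normal \<sigma> \<equiv> density lborel (normal_density 0 \<sigma>)"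

locale centred_gaussian_eigenbasis = prob_space M
  for M :: "'a measure" and X :: "'a \<Rightarrow> real^'n" and \<Sigma> :: "real^'n^'n"
    and I :: "'i set" and lam :: "'i \<Rightarrow> real" and v :: "'i \<Rightarrow> real^'n" +
  assumes posdef: "\<And>x. x \<noteq> 0 \<Longrightarrow> 0 < x \<bullet> (\<Sigma> *v x)"
    and gauss: "distributed M lborel X (\<lambda>x. ennreal (mvn_density \<Sigma> x))"
    and card_I: "card I = CARD('n)"
    and eigen: "\<And>j. j \<in> I \<Longrightarrow> \<Sigma> *v v j = lam j *\<^sub>R v j"
    and orthonormal: "\<And>j k. j \<in> I \<Longrightarrow> k \<in> I \<Longrightarrow> v j \<bullet> v k = (if j = k then 1 else 0)"
    and lam_pos: "\<And>j. j \<in> I \<Longrightarrow> 0 < lam j"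
begin

lemma finite_I [simp]: "finite I"
  using card_I by (metis card.infinite zero_less_card_finite less_irrefl)

lemma measurable_X [measurable]: "X \<in> borel_measurable M"
  using distributed_measurable[OF gauss] by simp

lemma emeasure_orthogonal_coordinates:
  fixes U :: "real^'n \<Rightarrow> real^'n"
  assumes U: "orthogonal_transformation U" and [measurable]: "B \<in> sets borel"
  shows "emeasure M {\<omega> \<in> space M. X \<omega> \<in> B} =
    (\<integral>\<^sup>+w. ennreal (mvn_density \<Sigma> (U w)) * indicator B (U w) \<partial>lborel)"
proof -
  have [measurable]: "U \<in> borel_measurable borel"
    using orthogonal_transformation_linear[OF U] by (rule borel_measurable_linear)
  have "emeasure M {\<omega> \<in> space M. X \<omega> \<in> B} = emeasure (distr M lborel X) B"
    by (subst emeasure_distr) (auto intro!: arg_cong[where f="emeasure M"])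
  also have "\<dots> = (\<integral>\<^sup>+x. ennreal (mvn_density \<Sigma> x) * indicator B x \<partial>distr lborel borel U)"
    using distributed_distr_eq_density[OF gauss] distributed_borel_measurable[OF gauss]
    by (simp add: emeasure_density lborel_distr_orthogonal[OF U])
  also have "\<dots> = (\<integral>\<^sup>+w. ennreal (mvn_density \<Sigma> (U w)) * indicator B (U w) \<partial>lborel)"
    using distributed_borel_measurable[OF gauss] by (simp add: nn_integral_distr)
  finally show ?thesis .
qed

text \<open>The normalising constant \<open>K\<close> is not computed here (that would require
  \<open>det \<Sigma> = (\<Prod>j\<in>I. lam j)\<close>); it is recovered from the total mass in the next lemma.\<close>

lemma emeasure_eigencoordinates_proportional:
  obtains K where "\<And>A. (\<And>j. j \<in> I \<Longrightarrow> A j \<in> sets borel) \<Longrightarrow>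
    emeasure M {\<omega> \<in> space M. \<forall>j\<in>I. v j \<bullet> X \<omega> \<in> A j} =
      ennreal K * (\<Prod>j\<in>I. emeasure (centred_normal (sqrt (lam j))) (A j))"
proof -
  have "card I = card (Basis :: (real^'n) set)"
    by (simp add: card_I)
  then obtain \<beta> where \<beta>: "bij_betw \<beta> I (Basis :: (real^'n) set)"
    by (metis finite_I finite_Basis finite_same_card_bij)
  define U where "U w = (\<Sum>j\<in>I. (w \<bullet> \<beta> j) *\<^sub>R v j)" for w
  have U_coord: "v k \<bullet> U w = w \<bullet> \<beta> k" if "k \<in> I" for k w
    using orthonormal_frame_inner[OF \<beta> orthonormal that] by (simp add: U_def)
  have U: "orthogonal_transformation U"
    using orthonormal_frame_orthogonal[OF \<beta> orthonormal] by (simp add: U_def[abs_def])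
  obtain K where K: "\<And>c. mvn_density \<Sigma> (\<Sum>j\<in>I. c j *\<^sub>R v j) =
      K * (\<Prod>j\<in>I. normal_density 0 (sqrt (lam j)) (c j))"
    using mvn_density_eigenbasis[OF posdef finite_I orthonormal eigen lam_pos] by blast
  show ?thesis
  proof (rule that)
    fix A :: "'i \<Rightarrow> real set"
    assume A [measurable]: "\<And>j. j \<in> I \<Longrightarrow> A j \<in> sets borel"
    define B where "B = {x. \<forall>j\<in>I. v j \<bullet> x \<in> A j}"
    have [measurable]: "B \<in> sets borel"
      unfolding B_def by measurable
    have dens_U: "mvn_density \<Sigma> (U w) = K * (\<Prod>j\<in>I. normal_density 0 (sqrt (lam j)) (w \<bullet> \<beta> j))" for w
      using K[of "\<lambda>j. w \<bullet> \<beta> j"] by (simp add: U_def)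
    have ind_U: "indicator B (U w) = (\<Prod>j\<in>I. indicator (A j) (w \<bullet> \<beta> j) :: ennreal)" for w
      by (auto simp: B_def U_coord indicator_def)
    have "emeasure M {\<omega> \<in> space M. \<forall>j\<in>I. v j \<bullet> X \<omega> \<in> A j} =
        (\<integral>\<^sup>+w. ennreal (mvn_density \<Sigma> (U w)) * indicator B (U w) \<partial>lborel)"
      using emeasure_orthogonal_coordinates[OF U, of B] by (simp add: B_def)
    also have "\<dots> = (\<integral>\<^sup>+w. ennreal K *
        (\<Prod>j\<in>I. ennreal (normal_density 0 (sqrt (lam j)) (w \<bullet> \<beta> j)) * indicator (A j) (w \<bullet> \<beta> j)) \<partial>lborel)"
      by (simp add: dens_U ind_U ennreal_mult'' prod_nonneg prod_ennreal prod.distrib mult.assoc)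
    also have "\<dots> = ennreal K *
        (\<Prod>j\<in>I. \<integral>\<^sup>+t. ennreal (normal_density 0 (sqrt (lam j)) t) * indicator (A j) t \<partial>lborel)"
      using nn_integral_lborel_prod_bij[OF \<beta>,
          of "\<lambda>j t. ennreal (normal_density 0 (sqrt (lam j)) t) * indicator (A j) t"]
      by (simp add: nn_integral_cmult)
    also have "\<dots> = ennreal K * (\<Prod>j\<in>I. emeasure (centred_normal (sqrt (lam j))) (A j))"
      by (intro arg_cong[where f="\<lambda>x. ennreal K * x"] prod.cong refl) (simp add: emeasure_density)
    finally show "emeasure M {\<omega> \<in> space M. \<forall>j\<in>I. v j \<bullet> X \<omega> \<in> A j} =
        ennreal K * (\<Prod>j\<in>I. emeasure (centred_normal (sqrt (lam j))) (A j))" .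
  qed
qed

lemma emeasure_eigencoordinates:
  assumes "\<And>j. j \<in> I \<Longrightarrow> A j \<in> sets borel"
  shows "emeasure M {\<omega> \<in> space M. \<forall>j\<in>I. v j \<bullet> X \<omega> \<in> A j} =
    (\<Prod>j\<in>I. emeasure (centred_normal (sqrt (lam j))) (A j))"
proof -
  obtain K where K: "\<And>A. (\<And>j. j \<in> I \<Longrightarrow> A j \<in> sets borel) \<Longrightarrow>
      emeasure M {\<omega> \<in> space M. \<forall>j\<in>I. v j \<bullet> X \<omega> \<in> A j} =
        ennreal K * (\<Prod>j\<in>I. emeasure (centred_normal (sqrt (lam j))) (A j))"
    using emeasure_eigencoordinates_proportional by blast
  have "emeasure (centred_normal (sqrt (lam j))) UNIV = 1" if "j \<in> I" for j
    using prob_space.emeasure_space_1[OF prob_space_normal_density] lam_pos[OF that] by simp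
  then have "ennreal K = 1"
    using K[of "\<lambda>_. UNIV"] emeasure_space_1 by simp
  then show ?thesis
    using K[OF assms] by simp
qed

lemma emeasure_eigencoordinates_subset:
  assumes "J \<subseteq> I" and "\<And>j. j \<in> J \<Longrightarrow> A j \<in> sets borel"
  shows "emeasure M {\<omega> \<in> space M. \<forall>j\<in>J. v j \<bullet> X \<omega> \<in> A j} =
    (\<Prod>j\<in>J. emeasure (centred_normal (sqrt (lam j))) (A j))"
proof -
  define A' where "A' j = (if j \<in> J then A j else UNIV)" for j
  have "{\<omega> \<in> space M. \<forall>j\<in>J. v j \<bullet> X \<omega> \<in> A j} = {\<omega> \<in> space M. \<forall>j\<in>I. v j \<bullet> X \<omega> \<in> A' j}"
    using assms(1) by (auto simp: A'_def)
  also have "emeasure M \<dots> = (\<Prod>j\<in>I. emeasure (centred_normal (sqrt (lam j))) (A' j))"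
    by (rule emeasure_eigencoordinates) (simp add: A'_def assms(2))
  also have "\<dots> = (\<Prod>j\<in>J. emeasure (centred_normal (sqrt (lam j))) (A j))"
    using assms(1) prob_space.emeasure_space_1[OF prob_space_normal_density] lam_pos
    by (intro prod.mono_neutral_cong_right) (auto simp: A'_def)
  finally show ?thesis .
qed

lemma distributed_eigencoordinate:
  assumes "k \<in> I"
  shows "distributed M lborel (\<lambda>\<omega>. v k \<bullet> X \<omega>) (normal_density 0 (sqrt (lam k)))"
  unfolding distributed_def
proof (intro conjI)
  show "distr M lborel (\<lambda>\<omega>. v k \<bullet> X \<omega>) = centred_normal (sqrt (lam k))"
  proof (rule measure_eqI)
    fix A assume "A \<in> sets (distr M lborel (\<lambda>\<omega>. v k \<bullet> X \<omega>))"
    then have "A \<in> sets borel" by simp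
    moreover have "(\<lambda>\<omega>. v k \<bullet> X \<omega>) -` A \<inter> space M = {\<omega> \<in> space M. \<forall>i\<in>{k}. v i \<bullet> X \<omega> \<in> A}"
      by auto
    ultimately show "emeasure (distr M lborel (\<lambda>\<omega>. v k \<bullet> X \<omega>)) A = emeasure (centred_normal (sqrt (lam k))) A"
      using emeasure_eigencoordinates_subset[of "{k}" "\<lambda>_. A"] assms by (simp add: emeasure_distr)
  qed simp
qed simp_all

lemma indep_eigencoordinates:
  assumes "j \<in> I" "k \<in> I" "j \<noteq> k"
  shows "indep_var borel (\<lambda>\<omega>. v j \<bullet> X \<omega>) borel (\<lambda>\<omega>. v k \<bullet> X \<omega>)"
  unfolding indep_var_distribution_eq
proof (intro conjI)
  have law: "distr M borel (\<lambda>\<omega>. v i \<bullet> X \<omega>) = centred_normal (sqrt (lam i))" if "i \<in> I" for i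
    using distributed_distr_eq_density[OF distributed_eigencoordinate[OF that]]
    by (metis distr_cong sets_lborel)
  have sigma_finite: "sigma_finite_measure (centred_normal (sqrt (lam i)))" if "i \<in> I" for i
    using lam_pos[OF that]
    by (intro prob_space_imp_sigma_finite prob_space_normal_density) simp
  show "distr M borel (\<lambda>\<omega>. v j \<bullet> X \<omega>) \<Otimes>\<^sub>M distr M borel (\<lambda>\<omega>. v k \<bullet> X \<omega>) =
      distr M (borel \<Otimes>\<^sub>M borel) (\<lambda>\<omega>. (v j \<bullet> X \<omega>, v k \<bullet> X \<omega>))"
    unfolding law[OF assms(1)] law[OF assms(2)]
  proof (rule pair_measure_eqI[OF sigma_finite[OF assms(1)] sigma_finite[OF assms(2)]])
    fix A B assume "A \<in> sets (centred_normal (sqrt (lam j)))" "B \<in> sets (centred_normal (sqrt (lam k)))"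
    then have [measurable]: "A \<in> sets borel" "B \<in> sets borel"
      by simp_all
    have "{\<omega> \<in> space M. \<forall>i\<in>{j, k}. v i \<bullet> X \<omega> \<in> (if i = j then A else B)} =
        (\<lambda>\<omega>. (v j \<bullet> X \<omega>, v k \<bullet> X \<omega>)) -` (A \<times> B) \<inter> space M"
      using assms(3) by auto
    then show "emeasure (centred_normal (sqrt (lam j))) A * emeasure (centred_normal (sqrt (lam k))) B =
        emeasure (distr M (borel \<Otimes>\<^sub>M borel) (\<lambda>\<omega>. (v j \<bullet> X \<omega>, v k \<bullet> X \<omega>))) (A \<times> B)"
      using emeasure_eigencoordinates_subset[of "{j, k}" "\<lambda>i. if i = j then A else B"] assms
      by (simp add: emeasure_distr)
  qed (simp cong: sets_pair_measure_cong)
qed simp_all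

lemma distributed_standardised_eigencoordinate:
  assumes "k \<in> I"
  shows "distributed M lborel (\<lambda>\<omega>. v k \<bullet> X \<omega> / sqrt (lam k)) std_normal_density"
  using distributed_eigencoordinate[OF assms] normal_standard_normal_convert[of "sqrt (lam k)"] lam_pos[OF assms]
  by simp

lemma cdf_eigencoordinate:
  assumes "k \<in> I"
  shows "measure M {\<omega> \<in> space M. v k \<bullet> X \<omega> \<le> x} = cdf std_normal_distribution (x / sqrt (lam k))"
proof -
  have "{\<omega> \<in> space M. v k \<bullet> X \<omega> \<le> x} =
      (\<lambda>\<omega>. v k \<bullet> X \<omega> / sqrt (lam k)) -` {..x / sqrt (lam k)} \<inter> space M"
    using lam_pos[OF assms] by (auto simp: divide_right_mono le_divide_eq)
  then show ?thesis
    using distr_eq_std_normal[OF distributed_standardised_eigencoordinate[OF assms]]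
      measure_distr[of "\<lambda>\<omega>. v k \<bullet> X \<omega> / sqrt (lam k)" M borel "{..x / sqrt (lam k)}"]
    by (simp add: cdf_def)
qed

lemma quantile_eigencoordinate:
  assumes "k \<in> I"
  shows "quantile M (\<lambda>\<omega>. v k \<bullet> X \<omega>) (cdf std_normal_distribution q) = sqrt (lam k) * q"
  using lam_pos[OF assms]
  by (intro quantile_eqI) (simp add: cdf_eigencoordinate[OF assms] cdf_std_normal_le_iff pos_le_divide_eq mult.commute)

lemma central_interval_eigencoordinate:
  assumes "k \<in> I" and q: "cdf std_normal_distribution q = 1 - \<alpha> / 2"
  shows "{\<omega> \<in> space M. v k \<bullet> X \<omega> \<in> central_interval M (\<lambda>\<omega>. v k \<bullet> X \<omega>) \<alpha>} =
    {\<omega> \<in> space M. v k \<bullet> X \<omega> / sqrt (lam k) \<in> {- q..q}}"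
proof -
  have "cdf std_normal_distribution (- q) = \<alpha> / 2"
    by (simp add: cdf_std_normal_minus q)
  then have "central_interval M (\<lambda>\<omega>. v k \<bullet> X \<omega>) \<alpha> = {sqrt (lam k) * - q .. sqrt (lam k) * q}"
    unfolding central_interval_def by (metis quantile_eigencoordinate[OF assms(1)] q)
  then show ?thesis
    using lam_pos[OF assms(1)] by (auto simp: le_divide_eq divide_le_eq mult.commute)
qed

lemma distr_standardised_eigencoordinate:
  assumes "k \<in> I"
  shows "distr M borel (\<lambda>\<omega>. v k \<bullet> X \<omega> / sqrt (lam k)) = std_normal_distribution"
  by (rule distr_eq_std_normal[OF distributed_standardised_eigencoordinate[OF assms]])

lemma integrable_eigencoordinate_power:
  assumes "j \<in> I"
  shows "integrable M (\<lambda>\<omega>. (v j \<bullet> X \<omega>) ^ m)"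
proof -
  have "integrable lborel (\<lambda>x. normal_density 0 (sqrt (lam j)) x * x ^ m)"
    using integrable_normal_moment[of "sqrt (lam j)" 0 m] lam_pos[OF assms] by simp
  then show ?thesis
    using distributed_integrable[OF distributed_eigencoordinate[OF assms], of "\<lambda>x. x ^ m"] by simp
qed

lemma cond_cov_standardised_self:
  assumes "k \<in> I" and [measurable]: "J \<in> sets borel"
  shows "cond_cov M {\<omega> \<in> space M. v k \<bullet> X \<omega> / sqrt (lam k) \<in> J} (\<lambda>\<omega>. v k \<bullet> X \<omega>) (\<lambda>\<omega>. v k \<bullet> X \<omega>) =
    lam k * cond_cov std_normal_distribution J (\<lambda>z. z) (\<lambda>z. z)"
proof -
  define s where "s = sqrt (lam k)"
  define Z where "Z \<omega> = v k \<bullet> X \<omega> / s" for \<omega>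
  have Z_measurable [measurable]: "Z \<in> borel_measurable M"
    by (simp add: Z_def[abs_def])
  have "(\<lambda>\<omega>. v k \<bullet> X \<omega>) = (\<lambda>\<omega>. s * Z \<omega>)"
    using lam_pos[OF assms(1)] by (simp add: Z_def s_def fun_eq_iff)
  then have "cond_cov M {\<omega> \<in> space M. Z \<omega> \<in> J} (\<lambda>\<omega>. v k \<bullet> X \<omega>) (\<lambda>\<omega>. v k \<bullet> X \<omega>) =
      s * s * cond_cov M {\<omega> \<in> space M. Z \<omega> \<in> J} Z Z"
    by (simp only: cond_cov_mult)
  also have "cond_cov M {\<omega> \<in> space M. Z \<omega> \<in> J} Z Z = cond_cov std_normal_distribution J (\<lambda>z. z) (\<lambda>z. z)"
    using cond_cov_distr[OF Z_measurable, of J "\<lambda>z. z" "\<lambda>z. z"] distr_standardised_eigencoordinate[OF assms(1)]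
    by (simp add: Z_def[abs_def] s_def)
  finally show ?thesis
    using lam_pos[OF assms(1)] by (simp add: Z_def s_def)
qed

lemma cond_cov_standardised_other:
  assumes "j \<in> I" "k \<in> I" "j \<noteq> k" and [measurable]: "J \<in> sets borel"
    and "measure std_normal_distribution J \<noteq> 0"
  shows "cond_cov M {\<omega> \<in> space M. v k \<bullet> X \<omega> / sqrt (lam k) \<in> J} (\<lambda>\<omega>. v j \<bullet> X \<omega>) (\<lambda>\<omega>. v j \<bullet> X \<omega>) =
    lam j"
proof -
  define Z where "Z \<omega> = v k \<bullet> X \<omega> / sqrt (lam k)" for \<omega>
  have [measurable]: "Z \<in> borel_measurable M"
    by (simp add: Z_def[abs_def])
  have "indep_var borel ((\<lambda>y. y / sqrt (lam k)) \<circ> (\<lambda>\<omega>. v k \<bullet> X \<omega>)) borel ((\<lambda>y. y) \<circ> (\<lambda>\<omega>. v j \<bullet> X \<omega>))"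
    using assms(3) by (intro indep_var_compose[OF indep_eigencoordinates[OF assms(2,1)]]) auto
  then have indep: "indep_var borel Z borel (\<lambda>\<omega>. v j \<bullet> X \<omega>)"
    by (simp add: o_def Z_def[abs_def])
  have moments: "integrable M (\<lambda>\<omega>. v j \<bullet> X \<omega>)" "integrable M (\<lambda>\<omega>. (v j \<bullet> X \<omega>)\<^sup>2)"
    using integrable_eigencoordinate_power[OF assms(1), of 1] integrable_eigencoordinate_power[OF assms(1), of 2]
    by simp_all
  have "Z -` J \<inter> space M = {\<omega> \<in> space M. Z \<omega> \<in> J}"
    by auto
  then have "prob {\<omega> \<in> space M. Z \<omega> \<in> J} = measure std_normal_distribution J"
    using measure_distr[of Z M borel J] distr_standardised_eigencoordinate[OF assms(2)]
    by (simp add: Z_def[abs_def])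
  then have "cond_cov M {\<omega> \<in> space M. Z \<omega> \<in> J} (\<lambda>\<omega>. v j \<bullet> X \<omega>) (\<lambda>\<omega>. v j \<bullet> X \<omega>) =
      variance (\<lambda>\<omega>. v j \<bullet> X \<omega>)"
    using assms(5) by (intro cond_cov_indep[OF indep _ _ moments]) simp_all
  also have "\<dots> = lam j"
    using normal_distributed_variance[OF _ distributed_eigencoordinate[OF assms(1)]] lam_pos[OF assms(1)]
    by simp
  finally show ?thesis
    by (simp add: Z_def)
qed

lemma cond_cov_central_interval:
  assumes "j \<in> I" "k \<in> I" and "\<alpha> < 1" and q: "cdf std_normal_distribution q = 1 - \<alpha> / 2"
  shows "cond_cov M {\<omega> \<in> space M. v k \<bullet> X \<omega> \<in> central_interval M (\<lambda>\<omega>. v k \<bullet> X \<omega>) \<alpha>}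
      (\<lambda>\<omega>. v j \<bullet> X \<omega>) (\<lambda>\<omega>. v j \<bullet> X \<omega>) =
    (if j = k then lam k * cond_cov std_normal_distribution {- q..q} (\<lambda>z. z) (\<lambda>z. z) else lam j)"
proof (cases "j = k")
  case True
  then show ?thesis
    unfolding central_interval_eigencoordinate[OF assms(2) q]
    using cond_cov_standardised_self[OF assms(2), of "{- q..q}"] by simp
next
  case False
  have "measure std_normal_distribution {- q..q} \<noteq> 0"
    using measure_std_normal_central_interval[OF assms(3) q] assms(3) by simp
  then show ?thesis
    unfolding central_interval_eigencoordinate[OF assms(2) q]
    using cond_cov_standardised_other[OF assms(1,2) False, of "{- q..q}"] False by simp
qed

lemma sum_cond_var_central_interval:
  assumes "k \<in> I" "\<alpha> < 1" and q: "cdf std_normal_distribution q = 1 - \<alpha> / 2"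
  shows "(\<Sum>j\<in>I. cond_cov M {\<omega> \<in> space M. v k \<bullet> X \<omega> \<in> central_interval M (\<lambda>\<omega>. v k \<bullet> X \<omega>) \<alpha>}
      (\<lambda>\<omega>. v j \<bullet> X \<omega>) (\<lambda>\<omega>. v j \<bullet> X \<omega>)) =
    (\<Sum>j\<in>I. lam j) - (1 - cond_cov std_normal_distribution {- q..q} (\<lambda>z. z) (\<lambda>z. z)) * lam k"
proof -
  define c where "c = cond_cov std_normal_distribution {- q..q} (\<lambda>z. z) (\<lambda>z. z)"
  have "(\<Sum>j\<in>I. cond_cov M {\<omega> \<in> space M. v k \<bullet> X \<omega> \<in> central_interval M (\<lambda>\<omega>. v k \<bullet> X \<omega>) \<alpha>}
      (\<lambda>\<omega>. v j \<bullet> X \<omega>) (\<lambda>\<omega>. v j \<bullet> X \<omega>)) = (\<Sum>j\<in>I. lam j - (if j = k then (1 - c) * lam k else 0))"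
    using cond_cov_central_interval[OF _ assms] by (intro sum.cong) (simp_all add: c_def algebra_simps)
  then show ?thesis
    using assms(1) by (simp add: sum_subtractf c_def)
qed

end

theorem theorem5:
  fixes M :: "'a measure"
    and X :: "'a \<Rightarrow> real^'n"
    and \<Sigma> :: "real^'n^'n"
    and lam :: "nat \<Rightarrow> real"
    and v :: "nat \<Rightarrow> real^'n"
    and \<alpha> :: real
    and i :: nat
  defines "d \<equiv> CARD('n)"
  defines "Y \<equiv> (\<lambda>j \<omega>. v j \<bullet> X \<omega>)"
  defines "\<Lambda> \<equiv> (\<lambda>k. cond_cov_matrix M {\<omega> \<in> space M. Y k \<omega> \<in> central_interval M (Y k) \<alpha>} Y)"
  assumes "prob_space M"
    and sym: "transpose \<Sigma> = \<Sigma>"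
    and posdef: "\<And>x. x \<noteq> 0 \<Longrightarrow> x \<bullet> (\<Sigma> *v x) > 0"
    and gauss: "distributed M lborel X (\<lambda>x. ennreal (mvn_density \<Sigma> x))"
    and eigen: "\<And>j. j \<in> {1..d} \<Longrightarrow> \<Sigma> *v v j = lam j *\<^sub>R v j"
    and orthonormal: "\<And>j k. j \<in> {1..d} \<Longrightarrow> k \<in> {1..d} \<Longrightarrow> v j \<bullet> v k = (if j = k then 1 else 0)"
    and ordered: "\<And>j k. j \<in> {1..d} \<Longrightarrow> k \<in> {1..d} \<Longrightarrow> j \<le> k \<Longrightarrow> lam k \<le> lam j"
    and "lam d > 0"
    and "0 < \<alpha>" "\<alpha> < 1"
    and "i \<in> {1..d}"
  shows "mat_trace d (\<Lambda> 1) \<le> mat_trace d (\<Lambda> i) \<and> mat_trace d (\<Lambda> i) \<le> mat_trace d (\<Lambda> d)"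
proof -
  interpret prob_space M
    by fact
  have d: "1 \<in> {1..d}" "d \<in> {1..d}"
    by (simp_all add: d_def Suc_le_eq)
  have lam_pos: "0 < lam j" if "j \<in> {1..d}" for j
    using ordered[OF that d(2)] that \<open>lam d > 0\<close> by auto
  interpret centred_gaussian_eigenbasis M X \<Sigma> "{1..d}" lam v
    by unfold_locales (use posdef gauss eigen orthonormal lam_pos in \<open>simp_all add: d_def\<close>)
  obtain q where q: "cdf std_normal_distribution q = 1 - \<alpha> / 2"
    using cdf_std_normal_surj[of "1 - \<alpha> / 2"] \<open>0 < \<alpha>\<close> \<open>\<alpha> < 1\<close> by auto
  define c where "c = cond_cov std_normal_distribution {- q..q} (\<lambda>z. z) (\<lambda>z. z)"
  have trace: "mat_trace d (\<Lambda> k) = (\<Sum>j=1..d. lam j) - (1 - c) * lam k" if "k \<in> {1..d}" for k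
    unfolding mat_trace_def \<Lambda>_def cond_cov_matrix_def Y_def c_def
    by (rule sum_cond_var_central_interval[OF that \<open>\<alpha> < 1\<close> q])
  have "0 \<le> 1 - c"
    using cond_var_std_normal_symmetric_le_1[of q] by (simp add: c_def)
  then show ?thesis
    using ordered d \<open>i \<in> {1..d}\<close> by (simp add: trace mult_left_mono)
qed

end
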